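(* Let $S$ be a nontrivial semiring, $\Sigma$ an alphabet, $L\in\mathrm{RevL}_1(\mathbb{B},\Sigma)$, and let $\underline{L}$ be the characteristic series of $L$ over $S$. Then $\underline{L}\in\mathrm{Rev}_1(S,\Sigma)$. As a consequence, $L\in\mathrm{RevL}_1(S,\Sigma)$ and $\mathrm{RevL}_1(\mathbb{B},\Sigma)\subseteq\mathrm{RevL}_1(S,\Sigma)$.
   Context: A semiring $(S,+,\cdot,0,1)$ has $(S,+,0)$ a commutative monoid, $(S,\cdot,1)$ a monoid, two-sided distributivity and $0$ absorbing; it is nontrivial if $0\neq1$. $\mathbb{B}=(\{0,1\},\lor,\land,0,1)$ is the Boolean semiring. A series over $S$ and a finite nonempty alphabet $\Sigma$ is a map $r\colon\Sigma^*\to S$, value $(r,w)$; its support is $\mathrm{supp}(r)=\{w\mid (r,w)\neq0\}$. The characteristic series $\underline{L}$ of $L\subseteq\Sigma^*$ over $S$ has $(\underline{L},w)=1$ for $w\in L$ and $0$ otherwise. A weighted automaton over $S$ and $\Sigma$ is $\mathcal{A}=(Q,\sigma,\iota,\tau)$ with $Q$ finite, $\sigma\colon Q\times\Sigma\times Q\to S$, $\iota,\tau\colon Q\to S$; a run on $w=a_1\cdots a_t$ is $q_0a_1q_1\cdots a_tq_t$ with all $\sigma(q_{k-1},a_k,q_k)\neq0$, of weight $\iota(q_0)\sigma(q_0,a_1,q_1)\cdots\sigma(q_{t-1},a_t,q_t)\tau(q_t)$, and $(\|\mathcal{A}\|,w)$ is the sum of weights of runs on $w$. $\mathcal{A}$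 is reversible if for all $p,p',q,q'\in Q$, $a\in\Sigma$: $\sigma(p,a,q)\neq0\neq\sigma(p,a,q')$ implies $q=q'$, and $\sigma(p,a,q)\neq0\neq\sigma(p',a,q)$ implies $p=p'$. $\mathrm{Rev}_1(S,\Sigma)$ is the set of series realised by reversible weighted automata over $S$ and $\Sigma$ with precisely one state $q$ such that $\iota(q)\neq0$, and $\mathrm{RevL}_1(S,\Sigma)=\{\mathrm{supp}(r)\mid r\in\mathrm{Rev}_1(S,\Sigma)\}$. In particular $\mathrm{RevL}_1(\mathbb{B},\Sigma)$ is the set of languages recognised by finite automata whose transition relation is deterministic and codeterministic, with exactly one initial state and arbitrary set of final states. *)

theory Defs
  imports Main
begin

datatype bsr = BZero | BOne

instantiation bsr :: semiring_1
begin
definition zero_bsr_def: "0 = BZero"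
definition one_bsr_def: "1 = BOne"
fun plus_bsr :: "bsr \<Rightarrow> bsr \<Rightarrow> bsr" where
  "plus_bsr BZero y = y"
| "plus_bsr BOne y = BOne"
fun times_bsr :: "bsr \<Rightarrow> bsr \<Rightarrow> bsr" where
  "times_bsr BZero y = BZero"
| "times_bsr BOne y = y"
instance
proof
  fix a b c :: bsr
  show "a + b + c = a + (b + c)" by (cases a; cases b; cases c) auto
  show "a + b = b + a" by (cases a; cases b) auto
  show "0 + a = a" by (simp add: zero_bsr_def)
  show "a * b * c = a * (b * c)" by (cases a; cases b; cases c) auto
  show "1 * a = a" by (simp add: one_bsr_def)
  show "a * 1 = a" by (cases a) (auto simp: one_bsr_def)
  show "(a + b) * c = a * c + b * c" by (cases a; cases b; cases c) auto
  show "a * (b + c) = a * b + a * c" by (cases a; cases b; cases c) auto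
  show "0 * a = 0" by (simp add: zero_bsr_def)
  show "a * 0 = 0" by (cases a) (auto simp: zero_bsr_def)
  show "(0::bsr) \<noteq> 1" by (simp add: zero_bsr_def one_bsr_def)
qed
end

text \<open>A weighted automaton over S and the alphabet Alph (Sigma in the paper) is given by a finite set
  of states Q (states are natural numbers), a transition weight function
  sigma :: Q x Alph x Q -> S, and initial/final weight functions iota, tau :: Q -> S.
  Values of these functions outside Q resp. Alph are irrelevant.\<close>

definition is_wa :: "nat set \<Rightarrow> 'c set \<Rightarrow> bool" where
  "is_wa Q Alph \<longleftrightarrow> finite Q"

definition runs :: "nat set \<Rightarrow> (nat \<Rightarrow> 'c \<Rightarrow> nat \<Rightarrow> 'a::semiring_1) \<Rightarrow> 'c list \<Rightarrow> nat list set" where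
  "runs Q \<sigma> w = {qs. length qs = Suc (length w) \<and> set qs \<subseteq> Q \<and>
      (\<forall>k < length w. \<sigma> (qs ! k) (w ! k) (qs ! Suc k) \<noteq> 0)}"

definition run_weight :: "(nat \<Rightarrow> 'c \<Rightarrow> nat \<Rightarrow> 'a::semiring_1) \<Rightarrow> (nat \<Rightarrow> 'a) \<Rightarrow> (nat \<Rightarrow> 'a)
    \<Rightarrow> 'c list \<Rightarrow> nat list \<Rightarrow> 'a" where
  "run_weight \<sigma> \<iota> \<tau> w qs =
     \<iota> (qs ! 0) * foldr (\<lambda>k acc. \<sigma> (qs ! k) (w ! k) (qs ! Suc k) * acc) [0..<length w]
        (\<tau> (qs ! length w))"

definition behaviour :: "nat set \<Rightarrow> (nat \<Rightarrow> 'c \<Rightarrow> nat \<Rightarrow> 'a::semiring_1) \<Rightarrow> (nat \<Rightarrow> 'a)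
    \<Rightarrow> (nat \<Rightarrow> 'a) \<Rightarrow> 'c list \<Rightarrow> 'a" where
  "behaviour Q \<sigma> \<iota> \<tau> w = (\<Sum>qs \<in> runs Q \<sigma> w. run_weight \<sigma> \<iota> \<tau> w qs)"

definition reversible :: "nat set \<Rightarrow> 'c set \<Rightarrow> (nat \<Rightarrow> 'c \<Rightarrow> nat \<Rightarrow> 'a::semiring_1) \<Rightarrow> bool" where
  "reversible Q Alph \<sigma> \<longleftrightarrow>
     (\<forall>p\<in>Q. \<forall>q\<in>Q. \<forall>q'\<in>Q. \<forall>a\<in>Alph. \<sigma> p a q \<noteq> 0 \<and> \<sigma> p a q' \<noteq> 0 \<longrightarrow> q = q') \<and>
     (\<forall>p\<in>Q. \<forall>p'\<in>Q. \<forall>q\<in>Q. \<forall>a\<in>Alph. \<sigma> p a q \<noteq> 0 \<and> \<sigma> p' a q \<noteq> 0 \<longrightarrow> p = p')"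

text \<open>A series over S and Alph is a map Alph^* -> S; we represent it as a function
  on all lists that is 0 outside Alph^* (= lists Alph).\<close>

definition is_series :: "'c set \<Rightarrow> ('c list \<Rightarrow> 'a::zero) \<Rightarrow> bool" where
  "is_series Alph r \<longleftrightarrow> (\<forall>w. w \<notin> lists Alph \<longrightarrow> r w = 0)"

definition supp :: "('c list \<Rightarrow> 'a::zero) \<Rightarrow> 'c list set" where
  "supp r = {w. r w \<noteq> 0}"

definition char_series :: "'c set \<Rightarrow> 'c list set \<Rightarrow> 'c list \<Rightarrow> 'a::semiring_1" where
  "char_series Alph L w = (if w \<in> lists Alph \<and> w \<in> L then 1 else 0)"

definition Rev1 :: "'c set \<Rightarrow> ('c list \<Rightarrow> 'a::semiring_1) set" where
  "Rev1 Alph = {r. is_series Alph r \<and>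
     (\<exists>Q \<sigma> \<iota> \<tau>. is_wa Q Alph \<and> reversible Q Alph \<sigma> \<and>
        (\<exists>!q. q \<in> Q \<and> \<iota> q \<noteq> 0) \<and>
        (\<forall>w \<in> lists Alph. r w = behaviour Q \<sigma> \<iota> \<tau> w))}"

definition RevL1 :: "'a::semiring_1 itself \<Rightarrow> 'c set \<Rightarrow> 'c list set set" where
  "RevL1 (_::'a itself) Alph = supp ` (Rev1 Alph :: ('c list \<Rightarrow> 'a) set)"

end

theory Submission
  imports Defs
begin

text \<open>Replace every nonzero weight of a reversible Boolean automaton by \<open>1 \<in> S\<close>. The runs do not
  change, and each run now has weight \<open>1\<close> if it is accepting and \<open>0\<close> otherwise, so the new
  automaton counts accepting runs. Forward determinism and the unique initial state leave at most
  one accepting run per word, hence the count is the characteristic series of the support.\<close>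

definition accepting_runs ::
    "nat set \<Rightarrow> (nat \<Rightarrow> 'c \<Rightarrow> nat \<Rightarrow> 'a::semiring_1) \<Rightarrow> (nat \<Rightarrow> 'a) \<Rightarrow> (nat \<Rightarrow> 'a) \<Rightarrow> 'c list
      \<Rightarrow> nat list set" where
  "accepting_runs Q \<sigma> \<iota> \<tau> w = {qs \<in> runs Q \<sigma> w. \<iota> (qs ! 0) \<noteq> 0 \<and> \<tau> (qs ! length w) \<noteq> 0}"

lemma finite_runs: "finite Q \<Longrightarrow> finite (runs Q \<sigma> w)"
  by (rule finite_subset[OF _ finite_lists_length_eq[of Q "Suc (length w)"]])
     (auto simp: runs_def)

lemma finite_accepting_runs: "finite Q \<Longrightarrow> finite (accepting_runs Q \<sigma> \<iota> \<tau> w)"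
  by (simp add: accepting_runs_def finite_runs)

lemma run_weight_unit_transitions:
  assumes "\<forall>k < length w. \<sigma> (qs ! k) (w ! k) (qs ! Suc k) = 1"
  shows "run_weight \<sigma> \<iota> \<tau> w qs = \<iota> (qs ! 0) * \<tau> (qs ! length w)"
proof -
  have "foldr (\<lambda>k acc. \<sigma> (qs ! k) (w ! k) (qs ! Suc k) * acc) [0..<n] x = x"
    if "n \<le> length w" for n x
    using that assms by (induction n arbitrary: x) auto
  then show ?thesis by (simp add: run_weight_def)
qed

lemma runs_eq_if_same_start:
  assumes "reversible Q Alph \<sigma>" and "w \<in> lists Alph"
    and qs: "qs \<in> runs Q \<sigma> w" and qs': "qs' \<in> runs Q \<sigma> w" and "qs ! 0 = qs' ! 0"
  shows "qs = qs'"
proof -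
  have "qs ! k = qs' ! k" if "k \<le> length w" for k
    using that
  proof (induction k)
    case 0
    show ?case by fact
  next
    case (Suc k)
    have "w ! k \<in> Alph"
      using \<open>w \<in> lists Alph\<close> Suc.prems by (auto simp: in_lists_conv_set)
    moreover have "qs ! k \<in> Q" "qs ! Suc k \<in> Q" "qs' ! Suc k \<in> Q"
      using qs qs' Suc.prems by (auto simp: runs_def intro!: subsetD[OF _ nth_mem])
    moreover have "\<sigma> (qs ! k) (w ! k) (qs ! Suc k) \<noteq> 0" "\<sigma> (qs' ! k) (w ! k) (qs' ! Suc k) \<noteq> 0"
      using qs qs' Suc.prems by (auto simp: runs_def)
    ultimately show ?case
      using \<open>reversible Q Alph \<sigma>\<close> Suc by (auto simp: reversible_def)
  qed
  with qs qs' show ?thesis by (auto simp: runs_def intro: nth_equalityI)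
qed

lemma card_accepting_runs_le_one:
  assumes "finite Q" "reversible Q Alph \<sigma>" "\<exists>!q. q \<in> Q \<and> \<iota> q \<noteq> 0" "w \<in> lists Alph"
  shows "card (accepting_runs Q \<sigma> \<iota> \<tau> w) \<le> 1"
proof -
  have "qs = qs'" if "qs \<in> accepting_runs Q \<sigma> \<iota> \<tau> w" "qs' \<in> accepting_runs Q \<sigma> \<iota> \<tau> w" for qs qs'
  proof (rule runs_eq_if_same_start[OF assms(2,4)])
    show "qs \<in> runs Q \<sigma> w" "qs' \<in> runs Q \<sigma> w"
      using that by (auto simp: accepting_runs_def)
    then have "qs ! 0 \<in> Q" "qs' ! 0 \<in> Q"
      by (auto simp: runs_def)
    then show "qs ! 0 = qs' ! 0"
      using assms(3) that by (auto simp: accepting_runs_def)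
  qed
  then show ?thesis
    by (simp add: card_le_Suc0_iff_eq[OF finite_accepting_runs[OF \<open>finite Q\<close>]])
qed

lemma bsr_nonzero_eq_one: "(x::bsr) \<noteq> 0 \<Longrightarrow> x = 1"
  by (cases x) (auto simp: zero_bsr_def one_bsr_def)

lemma bsr_mult_eq_zero_iff: "(a::bsr) * b = 0 \<longleftrightarrow> a = 0 \<or> b = 0"
  by (cases a; cases b) (auto simp: zero_bsr_def one_bsr_def)

lemma bsr_sum_eq_zero_iff: "finite A \<Longrightarrow> sum f A = (0::bsr) \<longleftrightarrow> (\<forall>x\<in>A. f x = 0)"
proof (induction A rule: finite_induct)
  case (insert x A)
  have "a + b = 0 \<longleftrightarrow> a = 0 \<and> b = 0" for a b :: bsr
    by (cases a; cases b) (auto simp: zero_bsr_def one_bsr_def)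
  with insert show ?case by simp
qed simp

lemma behaviour_bsr_eq_zero_iff:
  fixes \<sigma> :: "nat \<Rightarrow> 'c \<Rightarrow> nat \<Rightarrow> bsr"
  assumes "finite Q"
  shows "behaviour Q \<sigma> \<iota> \<tau> w = 0 \<longleftrightarrow> accepting_runs Q \<sigma> \<iota> \<tau> w = {}"
proof -
  have "run_weight \<sigma> \<iota> \<tau> w qs = \<iota> (qs ! 0) * \<tau> (qs ! length w)" if "qs \<in> runs Q \<sigma> w" for qs
    using that by (intro run_weight_unit_transitions) (auto simp: runs_def bsr_nonzero_eq_one)
  then show ?thesis
    by (auto simp: behaviour_def accepting_runs_def bsr_sum_eq_zero_iff[OF finite_runs[OF assms]]
        bsr_mult_eq_zero_iff)
qed

lemma runs_of_bool_nonzero [simp]: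
  "runs Q (\<lambda>p a q. of_bool (\<sigma> p a q \<noteq> 0) :: 'b::semiring_1) w = runs Q \<sigma> w"
  by (simp add: runs_def)

lemma reversible_of_bool_nonzero:
  "reversible Q Alph (\<lambda>p a q. of_bool (\<sigma> p a q \<noteq> 0) :: 'b::semiring_1) = reversible Q Alph \<sigma>"
  by (simp add: reversible_def)

lemma behaviour_of_bool_nonzero:
  assumes "finite Q"
  shows "behaviour Q (\<lambda>p a q. of_bool (\<sigma> p a q \<noteq> 0)) (\<lambda>q. of_bool (\<iota> q \<noteq> 0))
           (\<lambda>q. of_bool (\<tau> q \<noteq> 0)) w
         = (of_nat (card (accepting_runs Q \<sigma> \<iota> \<tau> w)) :: 'b::semiring_1)"
proof -
  have "run_weight (\<lambda>p a q. of_bool (\<sigma> p a q \<noteq> 0)) (\<lambda>q. of_bool (\<iota> q \<noteq> 0))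
          (\<lambda>q. of_bool (\<tau> q \<noteq> 0)) w qs
        = (of_bool (\<iota> (qs ! 0) \<noteq> 0 \<and> \<tau> (qs ! length w) \<noteq> 0) :: 'b)"
    if "qs \<in> runs Q \<sigma> w" for qs
    using that by (subst run_weight_unit_transitions) (auto simp: runs_def)
  then show ?thesis
    by (simp add: behaviour_def accepting_runs_def finite_runs[OF assms] Int_def)
qed

lemma behaviour_of_bool_nonzero_bsr:
  fixes \<sigma> :: "nat \<Rightarrow> 'c \<Rightarrow> nat \<Rightarrow> bsr"
  assumes "finite Q" "reversible Q Alph \<sigma>" "\<exists>!q. q \<in> Q \<and> \<iota> q \<noteq> 0" "w \<in> lists Alph"
  shows "behaviour Q (\<lambda>p a q. of_bool (\<sigma> p a q \<noteq> 0)) (\<lambda>q. of_bool (\<iota> q \<noteq> 0))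
           (\<lambda>q. of_bool (\<tau> q \<noteq> 0)) w
         = (of_bool (behaviour Q \<sigma> \<iota> \<tau> w \<noteq> 0) :: 'b::semiring_1)"
proof -
  have "card (accepting_runs Q \<sigma> \<iota> \<tau> w) \<le> 1"
    using card_accepting_runs_le_one[OF assms] .
  moreover have "behaviour Q \<sigma> \<iota> \<tau> w \<noteq> 0 \<longleftrightarrow> card (accepting_runs Q \<sigma> \<iota> \<tau> w) \<noteq> 0"
    by (simp add: behaviour_bsr_eq_zero_iff[OF \<open>finite Q\<close>] finite_accepting_runs[OF \<open>finite Q\<close>])
  ultimately show ?thesis
    by (auto simp: behaviour_of_bool_nonzero[OF \<open>finite Q\<close>] le_Suc_eq)
qed

lemma char_series_supp_in_Rev1:
  fixes r :: "'c list \<Rightarrow> bsr"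
  assumes "r \<in> Rev1 Alph"
  shows "(char_series Alph (supp r) :: 'c list \<Rightarrow> 'a::semiring_1) \<in> Rev1 Alph"
proof -
  obtain Q \<sigma> \<iota> \<tau> where "is_wa Q Alph" and rev: "reversible Q Alph \<sigma>"
    and ini: "\<exists>!q. q \<in> Q \<and> \<iota> q \<noteq> 0" and beh: "\<forall>w \<in> lists Alph. r w = behaviour Q \<sigma> \<iota> \<tau> w"
    using assms unfolding Rev1_def by blast
  have "finite Q"
    using \<open>is_wa Q Alph\<close> by (simp add: is_wa_def)
  show ?thesis
    unfolding Rev1_def
  proof (intro CollectI conjI exI)
    show "is_series Alph (char_series Alph (supp r) :: 'c list \<Rightarrow> 'a)"
      by (simp add: is_series_def char_series_def)
    show "is_wa Q Alph" by fact
    show "reversible Q Alph (\<lambda>p a q. of_bool (\<sigma> p a q \<noteq> 0) :: 'a)"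
      using rev by (simp add: reversible_of_bool_nonzero)
    show "\<exists>!q. q \<in> Q \<and> (of_bool (\<iota> q \<noteq> 0) :: 'a) \<noteq> 0"
      using ini by simp
    show "\<forall>w \<in> lists Alph. (char_series Alph (supp r) w :: 'a)
            = behaviour Q (\<lambda>p a q. of_bool (\<sigma> p a q \<noteq> 0)) (\<lambda>q. of_bool (\<iota> q \<noteq> 0))
                (\<lambda>q. of_bool (\<tau> q \<noteq> 0)) w"
      using beh by (simp add: behaviour_of_bool_nonzero_bsr[OF \<open>finite Q\<close> rev ini]
          char_series_def supp_def)
  qed
qed

lemma RevL1_subset_lists: "L \<in> RevL1 T Alph \<Longrightarrow> L \<subseteq> lists Alph"
  by (auto simp: RevL1_def Rev1_def is_series_def supp_def)

lemma supp_char_series: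
  "L \<subseteq> lists Alph \<Longrightarrow> supp (char_series Alph L :: 'c list \<Rightarrow> 'a::semiring_1) = L"
  by (auto simp: supp_def char_series_def)

lemma char_series_in_Rev1:
  "L \<in> RevL1 TYPE(bsr) Alph \<Longrightarrow> (char_series Alph L :: 'c list \<Rightarrow> 'a::semiring_1) \<in> Rev1 Alph"
  by (auto simp: RevL1_def intro: char_series_supp_in_Rev1)

lemma RevL1_bsr_subset:
  fixes Alph :: "'c set"
  shows "RevL1 TYPE(bsr) Alph \<subseteq> RevL1 TYPE('a::semiring_1) Alph"
proof
  fix L
  assume L: "L \<in> RevL1 TYPE(bsr) Alph"
  have "L = supp (char_series Alph L :: 'c list \<Rightarrow> 'a)"
    by (rule supp_char_series[OF RevL1_subset_lists[OF L], symmetric])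
  with char_series_in_Rev1[OF L] show "L \<in> RevL1 TYPE('a) Alph"
    by (auto simp: RevL1_def)
qed

theorem proposition3:
  fixes Alph :: "'c set" and L :: "'c list set"
  assumes "finite Alph" and "Alph \<noteq> {}"
    and "L \<in> RevL1 TYPE(bsr) Alph"
  shows "(char_series Alph L :: 'c list \<Rightarrow> 'a::semiring_1) \<in> Rev1 Alph
         \<and> L \<in> RevL1 TYPE('a) Alph
         \<and> RevL1 TYPE(bsr) Alph \<subseteq> RevL1 TYPE('a) Alph"
  using char_series_in_Rev1[OF assms(3)] RevL1_bsr_subset assms(3) by blast

end
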